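(* For every real $0<\epsilon<1$ and all integers $n\ge 2/\epsilon$ and $2\le k\le \epsilon n$, there exists a feasible irredundant (circular) heterogeneous PV graph $\vec G_R$ with $n$ sites and $k$ carriers such that $$\mathcal M(\vec G_R)\ >\ \tfrac14(1-\epsilon)^2\,n^2\,(k-2).$$ (This holds even though the agent knows $\vec G_R$, $n$ and $k$ and has unlimited memory.)
   Context: A PV (periodically varying) system consists of a finite set $S$ of $n$ sites and a set $C$ of $k\le n$ carriers. Each carrier $c$ has a route $\pi(c)=\langle x_0,\dots,x_{p(c)-1}\rangle$, a finite sequence of sites of length $p(c)\ge1$ called its period; $\pi(c)[j]=x_{j\bmod p(c)}$. At each time $t\in\mathbb N$ carrier $c$ is at $\pi(c)[t]$ and moves to $\pi(c)[t+1]$. The PV graph $\vec G_R$ is the directed edge-labelled multigraph on $S$ with edges $(x_i,x_{i+1},i)$, $0\le i<p(c)$, for every carrier. The system is homogeneous if all $p(c)$ are equal, heterogeneous otherwise. A route is simple if $\pi(c)[i]\ne\pi(c)[i+1]$ for all $i$ and, whenever $\pi(c)[i]=\pi(c)[j]$ with $0\le i<j<p(c)$, then $\pi(c)[i+1]\ne\pi(c)[j+1]$. A route is irredundant (circular) if it is simple and the directed multigraph it describes is either a simple cycle (the sites $x_0,\dots,x_{p(c)-1}$ are distinct) or a virtual cycle, i.e. the closed walk of a simple traversal of a tree (each tree edge traversed once in each direction); in particular $p(c)\le 2(n-1)$. A PV graph is irredundant if all its routes are irredundant. An exploring agent is injected at time $0$ at a site of $\mathrm{start}(\vec G_R)=\{\pi(c)[0]:c\in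 C\}$; if at time $t$ it is at site $x$ it must either ride one step with some carrier $c$ with $\pi(c)[t]=x$ (one move) or halt; it cannot wait. A strategy solves PVG-Exploration of $\vec G_R$ if from every injection site the agent visits all sites and halts in finite time. $\vec G_R$ is feasible if from the starting point of every carrier some realizable walk visits all sites. For feasible $\vec G_R$, $\mathcal M(\vec G_R)$ denotes the minimum, over all deterministic strategies solving PVG-Exploration of $\vec G_R$ (which may use full knowledge of $\vec G_R$ and unlimited memory), of the maximum over injection sites of the number of moves performed. *)

theory Defs
  imports Complex_Main
begin

text \<open>A PV graph with n sites and k carriers: sites are 0..<n, carriers are 0..<k,
  the route of carrier c is the list R ! c (its period is its length).\<close>

definition pv_graph :: "nat \<Rightarrow> nat \<Rightarrow> nat list list \<Rightarrow> bool" where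
  "pv_graph n k R \<longleftrightarrow> length R = k \<and>
     (\<forall>r\<in>set R. r \<noteq> [] \<and> set r \<subseteq> {0..<n})"

definition period :: "nat list list \<Rightarrow> nat \<Rightarrow> nat" where
  "period R c = length (R ! c)"

definition pos :: "nat list list \<Rightarrow> nat \<Rightarrow> nat \<Rightarrow> nat" where
  "pos R c t = (R ! c) ! (t mod length (R ! c))"

definition start_sites :: "nat list list \<Rightarrow> nat set" where
  "start_sites R = {pos R c 0 | c. c < length R}"

definition homogeneous :: "nat list list \<Rightarrow> bool" where
  "homogeneous R \<longleftrightarrow> (\<forall>c<length R. \<forall>d<length R. period R c = period R d)"

definition heterogeneous :: "nat list list \<Rightarrow> bool" where
  "heterogeneous R \<longleftrightarrow> \<not> homogeneous R"

text \<open>Route-level notions; r ! (i mod length r) is the cyclic indexing pi(c)[i].\<close>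

definition simple_route :: "nat list \<Rightarrow> bool" where
  "simple_route r \<longleftrightarrow> length r \<ge> 1 \<and>
     (\<forall>i<length r. r ! i \<noteq> r ! (Suc i mod length r)) \<and>
     (\<forall>i j. i < j \<and> j < length r \<and> r ! i = r ! j \<longrightarrow>
        r ! (Suc i mod length r) \<noteq> r ! (Suc j mod length r))"

definition is_tree :: "nat set \<Rightarrow> nat set set \<Rightarrow> bool" where
  "is_tree V T \<longleftrightarrow> finite V \<and> V \<noteq> {} \<and>
     (\<forall>e\<in>T. \<exists>a b. a \<in> V \<and> b \<in> V \<and> a \<noteq> b \<and> e = {a, b}) \<and>
     card T = card V - 1 \<and>
     (\<forall>a\<in>V. \<forall>b\<in>V. (a, b) \<in> {(x, y). {x, y} \<in> T}\<^sup>*)"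

definition simple_cycle_route :: "nat list \<Rightarrow> bool" where
  "simple_cycle_route r \<longleftrightarrow> distinct r"

definition virtual_cycle_route :: "nat list \<Rightarrow> bool" where
  "virtual_cycle_route r \<longleftrightarrow> (\<exists>T. is_tree (set r) T \<and>
     (\<forall>i<length r. {r ! i, r ! (Suc i mod length r)} \<in> T) \<and>
     (\<forall>a b. {a, b} \<in> T \<and> a \<noteq> b \<longrightarrow>
        card {i. i < length r \<and> r ! i = a \<and> r ! (Suc i mod length r) = b} = 1))"

definition irredundant_route :: "nat list \<Rightarrow> bool" where
  "irredundant_route r \<longleftrightarrow> simple_route r \<and>
     (simple_cycle_route r \<or> virtual_cycle_route r)"

definition irredundant :: "nat list list \<Rightarrow> bool" where
  "irredundant R \<longleftrightarrow> (\<forall>r\<in>set R. irredundant_route r)"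

text \<open>The agent is injected at site x at time 0 and performs the moves
  cs ! 0, cs ! 1, ... (cs ! i is the carrier ridden at time i), then halts.
  at R x cs i is its site after i moves (i.e. at time i).\<close>
definition at_site :: "nat list list \<Rightarrow> nat \<Rightarrow> nat list \<Rightarrow> nat \<Rightarrow> nat" where
  "at_site R x cs i = (if i = 0 then x else pos R (cs ! (i - 1)) i)"

definition realizable :: "nat list list \<Rightarrow> nat \<Rightarrow> nat list \<Rightarrow> bool" where
  "realizable R x cs \<longleftrightarrow>
     (\<forall>i<length cs. cs ! i < length R \<and> pos R (cs ! i) i = at_site R x cs i)"

definition visits_all :: "nat \<Rightarrow> nat list list \<Rightarrow> nat \<Rightarrow> nat list \<Rightarrow> bool" where
  "visits_all n R x cs \<longleftrightarrow> {0..<n} \<subseteq> {at_site R x cs i | i. i \<le> length cs}"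

definition feasible :: "nat \<Rightarrow> nat list list \<Rightarrow> bool" where
  "feasible n R \<longleftrightarrow>
     (\<forall>x\<in>start_sites R. \<exists>cs. realizable R x cs \<and> visits_all n R x cs)"

text \<open>A deterministic strategy with full knowledge of the graph and unlimited memory
  determines, for each injection site, the finite sequence of moves performed before
  halting (the agent receives no further input that is not determined by the graph
  and the injection site).\<close>
definition solves :: "nat \<Rightarrow> nat list list \<Rightarrow> (nat \<Rightarrow> nat list) \<Rightarrow> bool" where
  "solves n R \<sigma> \<longleftrightarrow>
     (\<forall>x\<in>start_sites R. realizable R x (\<sigma> x) \<and> visits_all n R x (\<sigma> x))"

definition min_moves :: "nat \<Rightarrow> nat list list \<Rightarrow> nat" where
  "min_moves n R = (LEAST m. \<exists>\<sigma>. solves n R \<sigma> \<and>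
     (\<forall>x\<in>start_sites R. length (\<sigma> x) \<le> m))"

end

theory Submission
  imports Defs
begin

(*
  The hard instances are chains of m simple-cycle routes C_0, ..., C_{m-1} of
  alternating periods p and p+1 on n = 2p+m-2 sites.  Two carriers on different
  routes C_j, C_j' are ever at the same site at the same time only if |j - j'| = 1,
  and then only at times t with L = p(p+1) dividing t+max(j,j').  Site 0 is visited
  only by C_0 and site 1 only by C_{m-1}.  Assigning level j to the carriers of C_j,
  an agent can raise its level only at such synchronisation times, so (level
  invariant) after i moves its level is at most i/(L-1); reaching site 1 from site 0
  therefore costs at least (m-1)(L-1)+1 moves.  The spare k-m carriers run on C_0.

  Real-number estimates show that m ~ min(k, n/3) makes the chain
  cost exceed (n-k)^2(k-2)/4, using AM-GM when k > n/3; for the remaining small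
  cases the trivial instance suffices.  The main theorem follows since
  (n-k)^2 >= (1-eps)^2 n^2 when k <= eps n.
*)

lemma distinct_route_irredundant:
  assumes "distinct r" "length r \<ge> 2"
  shows "irredundant_route r"
proof -
  have "simple_route r"
    unfolding simple_route_def
  proof (intro conjI allI impI)
    show "1 \<le> length r" using assms by simp
  next
    fix i assume i: "i < length r"
    have "Suc i mod length r < length r" using i by (intro mod_less_divisor) linarith
    moreover have "Suc i mod length r \<noteq> i"
    proof (cases "Suc i < length r")
      case True then show ?thesis by simp
    next
      case False then have "Suc i = length r" using i by simp
      then show ?thesis using assms(2) by simp
    qed
    ultimately show "r ! i \<noteq> r ! (Suc i mod length r)"
      using assms(1) i nth_eq_iff_index_eq by metis
  next
    fix i j assume "i < j \<and> j < length r \<and> r ! i = r ! j"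
    then show "r ! (Suc i mod length r) \<noteq> r ! (Suc j mod length r)"
      using assms(1) nth_eq_iff_index_eq by (metis less_trans nat_neq_iff)
  qed
  then show ?thesis unfolding irredundant_route_def simple_cycle_route_def using assms by simp
qed

lemma visits_all_length:
  assumes "visits_all n R x cs"
  shows "n \<le> Suc (length cs)"
proof -
  have "{0..<n} \<subseteq> at_site R x cs ` {..length cs}"
    using assms unfolding visits_all_def by auto
  then have "card {0..<n} \<le> card (at_site R x cs ` {..length cs})"
    by (intro card_mono) auto
  also have "\<dots> \<le> card {..length cs}" by (rule card_image_le) simp
  finally show ?thesis by simp
qed

lemma min_moves_lower_bound:
  assumes "feasible n R"
    and "\<And>\<sigma>. solves n R \<sigma> \<Longrightarrow> \<exists>x\<in>start_sites R. B \<le> length (\<sigma> x)"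
  shows "B \<le> min_moves n R"
proof -
  define \<sigma> where "\<sigma> x = (SOME cs. realizable R x cs \<and> visits_all n R x cs)" for x
  have "solves n R \<sigma>" unfolding solves_def \<sigma>_def
    using assms(1) unfolding feasible_def by (metis (mono_tags, lifting) someI_ex)
  moreover have "finite (start_sites R)" unfolding start_sites_def by simp
  ultimately have "\<exists>m \<sigma>. solves n R \<sigma> \<and> (\<forall>x\<in>start_sites R. length (\<sigma> x) \<le> m)"
    by (intro exI[of _ "Max ((\<lambda>x. length (\<sigma> x)) ` start_sites R)"] exI[of _ \<sigma>]) auto
  from LeastI_ex[OF this] obtain \<tau> where "solves n R \<tau>"
    and "\<forall>x\<in>start_sites R. length (\<tau> x) \<le> min_moves n R"
    unfolding min_moves_def by blast
  with assms(2) show ?thesis by fastforce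
qed

lemma level_invariant:
  assumes real: "realizable R x cs"
    and switch: "\<And>c d t. c < length R \<Longrightarrow> d < length R \<Longrightarrow> pos R c t = pos R d t \<Longrightarrow>
        lev d \<le> Suc (lev c) \<and> (lev d = Suc (lev c) \<longrightarrow> L dvd (t + lev d))"
    and L: "L \<ge> 1"
    and start: "cs \<noteq> [] \<Longrightarrow> lev (cs ! 0) = 0"
  shows "i < length cs \<Longrightarrow> lev (cs ! i) * (L - 1) \<le> i"
proof (induction i)
  case 0 then show ?case using start by simp
next
  case (Suc i)
  have ih: "lev (cs ! i) * (L - 1) \<le> i" using Suc by simp
  have carriers: "cs ! i < length R" "cs ! Suc i < length R" using real Suc.prems
    unfolding realizable_def by auto
  have "pos R (cs ! Suc i) (Suc i) = at_site R x cs (Suc i)" using real Suc.prems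
    unfolding realizable_def by auto
  also have "\<dots> = pos R (cs ! i) (Suc i)" unfolding at_site_def by simp
  finally have meet: "pos R (cs ! i) (Suc i) = pos R (cs ! Suc i) (Suc i)" by simp
  from switch[OF carriers meet] have up: "lev (cs ! Suc i) \<le> Suc (lev (cs ! i))"
    and sync: "lev (cs ! Suc i) = Suc (lev (cs ! i)) \<longrightarrow> L dvd (Suc i + lev (cs ! Suc i))"
    by auto
  show ?case
  proof (cases "lev (cs ! Suc i) = Suc (lev (cs ! i))")
    case False
    then have "lev (cs ! Suc i) * (L - 1) \<le> lev (cs ! i) * (L - 1)"
      using up by (intro mult_right_mono) simp_all
    then show ?thesis using ih by linarith
  next
    case True
    define j where "j = lev (cs ! i)"
    obtain a where a: "Suc i + Suc j = L * a" using sync True j_def by (auto elim: dvdE)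
    have ih': "j * (L - 1) \<le> i" using ih j_def by simp
    text \<open>The multiple L*a of L lies strictly between L*j and L*(j+1) otherwise.\<close>
    have "Suc j * (L - 1) \<le> Suc i"
    proof (rule ccontr)
      assume late: "\<not> ?thesis"
      have "Suc j * (L - 1) + Suc j = L * Suc j" "j * (L - 1) + Suc j = L * j + 1"
        using L by (cases L; simp add: algebra_simps)+
      then have "L * a < L * Suc j" "L * j < L * a"
        using late ih' a by linarith+
      then show False using mult_less_cancel1 by (metis less_Suc_eq_le not_less)
    qed
    then show ?thesis using True j_def by simp
  qed
qed

lemma mod_cancel_lt:
  fixes t j j' q :: nat
  assumes "(t + j) mod q = (t + j') mod q" "j < q" "j' < q"
  shows "j = j'"
proof -
  have "j mod q = j' mod q" using assms(1) by (simp add: nat_mod_eq_iff)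
  then show ?thesis using assms by simp
qed

lemma dvd_Suc_iff_mod_last:
  fixes t q :: nat
  assumes "0 < q"
  shows "q dvd Suc t \<longleftrightarrow> t mod q = q - 1"
proof
  assume "q dvd Suc t"
  then have "Suc t mod q = 0" by simp
  then have "Suc (t mod q) = q" unfolding mod_Suc by (auto split: if_splits)
  then show "t mod q = q - 1" by simp
next
  assume "t mod q = q - 1"
  then show "q dvd Suc t" using assms
    by (metis One_nat_def Suc_eq_plus1 Suc_pred dvd_refl mod_Suc_eq mod_eq_0_iff_dvd)
qed

lemma pred_div:
  fixes u D :: nat
  assumes "0 < D" "0 < u"
  shows "(u - 1) div D = (if u mod D = 0 then u div D - 1 else u div D)"
proof -
  define a where "a = u div D"
  define r where "r = u mod D"
  have u: "u = a * D + r" and r: "r < D" unfolding a_def r_def using assms(1) by simp_all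
  show ?thesis
  proof (cases "r = 0")
    case True
    then obtain b where b: "a = Suc b" using u assms(2) by (cases a) auto
    then have "u - 1 = b * D + (D - 1)" using u True assms(1) by simp
    then have "(u - 1) div D = a - 1"
      using b assms(1) by (intro div_nat_eqI) (auto simp: algebra_simps)
    then show ?thesis using True unfolding a_def r_def by simp
  next
    case False
    then have "(u - 1) div D = a" using u r by (intro div_nat_eqI) (auto simp: algebra_simps)
    then show ?thesis using False unfolding a_def r_def by simp
  qed
qed

lemma mod_hit:
  fixes a q y :: nat
  assumes "0 < q" "y < q"
  shows "\<exists>d<q. (a + d) mod q = y"
proof -
  define d where "d = (y + q - a mod q) mod q"
  have "(a + d) mod q = (a mod q + (y + q - a mod q)) mod q"
    unfolding d_def by (simp add: mod_add_left_eq mod_add_right_eq)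
  also have "a mod q + (y + q - a mod q) = y + q"
    using mod_less_divisor[OF assms(1), of a] by linarith
  finally have "(a + d) mod q = y" using assms by simp
  moreover have "d < q" unfolding d_def using assms by simp
  ultimately show ?thesis by blast
qed

text \<open>The trivial instance: one carrier walks the sites 0, ..., n-1 in order and
  all other carriers shuttle between sites 0 and 1.  Every carrier starts at site 0,
  and visiting all n sites takes n-1 moves.\<close>

definition line_graph :: "nat \<Rightarrow> nat \<Rightarrow> nat list list" where
  "line_graph n k = [0..<n] # replicate (k - 1) [0, 1]"

lemma line_graph_instance:
  assumes n: "n \<ge> 3" and k: "k \<ge> 2"
  shows "\<exists>R. pv_graph n k R \<and> feasible n R \<and> irredundant R \<and> heterogeneous R
    \<and> n - 1 \<le> min_moves n R"
proof -
  let ?R = "line_graph n k"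
  have len: "length ?R = k" using k unfolding line_graph_def by simp
  have nth0: "?R ! 0 = [0..<n]" unfolding line_graph_def by simp
  have nthc: "c < k \<Longrightarrow> c \<noteq> 0 \<Longrightarrow> ?R ! c = [0, 1]" for c
    unfolding line_graph_def by (cases c) auto
  have pv: "pv_graph n k ?R" unfolding pv_graph_def line_graph_def using k n by auto
  have irr: "irredundant ?R" unfolding irredundant_def line_graph_def
    using n by (auto intro!: distinct_route_irredundant)
  have het: "heterogeneous ?R" unfolding heterogeneous_def homogeneous_def period_def
  proof
    assume "\<forall>c<length ?R. \<forall>d<length ?R. length (?R ! c) = length (?R ! d)"
    then have "length (?R ! 0) = length (?R ! 1)" using len k by simp
    then show False using nth0 nthc[of 1] k n by simp
  qed
  have pos0: "pos ?R 0 i = i" if "i < n" for i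
    unfolding pos_def nth0 using that by simp
  have starts: "start_sites ?R = {0}"
  proof -
    have "pos ?R c 0 = 0" if "c < k" for c
      using that nth0 nthc[OF that] n unfolding pos_def by (cases "c = 0") auto
    then show ?thesis unfolding start_sites_def using len k by force
  qed
  define cs where "cs = replicate (n - 1) (0::nat)"
  have at: "i \<le> n - 1 \<Longrightarrow> at_site ?R 0 cs i = i" for i
    unfolding at_site_def cs_def using pos0 n by auto
  have "realizable ?R 0 cs"
    unfolding realizable_def using at pos0 len k by (auto simp: cs_def)
  moreover have "visits_all n ?R 0 cs"
    unfolding visits_all_def
  proof
    fix s assume "s \<in> {0..<n}"
    then have "s = at_site ?R 0 cs s \<and> s \<le> length cs" using at by (auto simp: cs_def)
    then show "s \<in> {at_site ?R 0 cs i |i. i \<le> length cs}" by blast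
  qed
  ultimately have feas: "feasible n ?R" unfolding feasible_def starts by blast
  have "n - 1 \<le> min_moves n ?R"
  proof (rule min_moves_lower_bound[OF feas])
    fix \<sigma> assume "solves n ?R \<sigma>"
    then have "visits_all n ?R 0 (\<sigma> 0)" unfolding solves_def starts by simp
    then show "\<exists>x\<in>start_sites ?R. n - 1 \<le> length (\<sigma> x)"
      using visits_all_length starts by fastforce
  qed
  then show ?thesis using pv feas irr het by blast
qed

text \<open>In its own phase x < per j it visits: at x = 0 the junction site
  j+1 shared with route j-1 (site 0 for j = 0); at x = per j - 1 the junction site
  j+2 shared with route j+1 (site 1 for j = m-1); in between the interior sites
  m+1, ..., m+p-2 for even j and m+p-1, ..., m+2p-3 for odd j.\<close>

locale chain =
  fixes p m k :: nat
  assumes m2: "2 \<le> m" and mp: "m \<le> p" and mk: "m \<le> k"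
begin

definition per :: "nat \<Rightarrow> nat" where "per j = (if even j then p else Suc p)"

definition site :: "nat \<Rightarrow> nat \<Rightarrow> nat" where
  "site j x = (if x = 0 then (if j = 0 then 0 else j + 1)
     else if x = per j - 1 then (if j = m - 1 then 1 else j + 2)
     else if even j then m + x else m + p - 2 + x)"

definition route :: "nat \<Rightarrow> nat list" where
  "route j = map (\<lambda>i. site j ((i + j) mod per j)) [0..<per j]"

definition lvl :: "nat \<Rightarrow> nat" where "lvl c = (if c < m then c else 0)"

definition routes :: "nat list list" where "routes = map (\<lambda>c. route (lvl c)) [0..<k]"

text \<open>Synchronisation period: carriers of levels j and j+1 meet exactly when
  sync divides t + j + 1.\<close>

definition sync :: nat where "sync = p * Suc p"

definition num_sites :: nat where "num_sites = 2 * p + m - 2"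

definition loc :: "nat \<Rightarrow> nat \<Rightarrow> nat" where "loc j t = site j ((t + j) mod per j)"

lemma per_bounds: "2 \<le> per j" "p \<le> per j" "per j \<le> Suc p" "0 < per j"
  using m2 mp unfolding per_def by auto

lemma per_even: "even j \<Longrightarrow> per j = p" and per_odd: "odd j \<Longrightarrow> per j = Suc p"
  unfolding per_def by auto

lemma per_dvd_sync: "per j dvd sync"
  unfolding per_def sync_def using dvd_triv_right[of "Suc p" p] by simp

lemma sync_bounds: "6 \<le> sync" "Suc p \<le> sync - 1"
proof -
  have "2 \<le> p" using m2 mp by simp
  then have "2 * 3 \<le> p * Suc p" "2 * Suc p \<le> p * Suc p" by (intro mult_mono; simp)+
  then show "6 \<le> sync" "Suc p \<le> sync - 1" unfolding sync_def by simp_all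
qed

lemma length_routes: "length routes = k" unfolding routes_def by simp

lemma lvl_less: "lvl c < m" unfolding lvl_def using m2 by auto

lemma lvl_id: "c < m \<Longrightarrow> lvl c = c" unfolding lvl_def by simp

lemma routes_nth: "c < k \<Longrightarrow> routes ! c = route (lvl c)" unfolding routes_def by simp

lemma pos_routes: "c < k \<Longrightarrow> pos routes c t = loc (lvl c) t"
proof -
  assume c: "c < k"
  let ?j = "lvl c"
  have "pos routes c t = route ?j ! (t mod per ?j)" unfolding pos_def routes_nth[OF c]
    by (simp add: route_def)
  also have "\<dots> = site ?j ((t mod per ?j + ?j) mod per ?j)" unfolding route_def
    using per_bounds(4)[of ?j] by simp
  also have "\<dots> = loc ?j t" unfolding loc_def by (simp add: mod_add_left_eq)
  finally show ?thesis .
qed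

lemma pos_loc: "c < m \<Longrightarrow> pos routes c t = loc c t"
  using pos_routes[of c t] lvl_id[of c] mk by simp

lemma site_cases:
  assumes "x < per j"
  shows "(x = 0 \<and> site j x = (if j = 0 then 0 else j + 1))
    \<or> (x \<noteq> 0 \<and> x = per j - 1 \<and> site j x = (if j = m - 1 then 1 else j + 2))
    \<or> (0 < x \<and> x < per j - 1 \<and> even j \<and> site j x = m + x)
    \<or> (0 < x \<and> x < per j - 1 \<and> odd j \<and> site j x = m + p - 2 + x)"
proof -
  consider "x = 0" | "x \<noteq> 0" "x = per j - 1" | "x \<noteq> 0" "x \<noteq> per j - 1" "even j"
    | "x \<noteq> 0" "x \<noteq> per j - 1" "odd j" by blast
  then show ?thesis
  proof cases
    case 3 then show ?thesis using assms unfolding site_def by auto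
  next
    case 4 then show ?thesis using assms unfolding site_def by auto
  qed (simp_all add: site_def)
qed

lemma site_less: assumes "j < m" "x < per j" shows "site j x < num_sites"
proof -
  have p2: "2 \<le> p" using m2 mp by simp
  have sites: "num_sites + 2 = 2 * p + m" unfolding num_sites_def using p2 by simp
  from site_cases[OF assms(2)] show ?thesis
  proof (elim disjE conjE)
    assume "x = 0" "site j x = (if j = 0 then 0 else j + 1)"
    then show ?thesis using assms(1) sites p2 by (cases "j = 0") auto
  next
    assume "x \<noteq> 0" "x = per j - 1" "site j x = (if j = m - 1 then 1 else j + 2)"
    then show ?thesis using assms(1) sites p2 by (cases "j = m - 1") auto
  next
    assume "0 < x" "x < per j - 1" "even j" "site j x = m + x"
    then show ?thesis using sites per_even[of j] by simp
  next
    assume "0 < x" "x < per j - 1" "odd j" "site j x = m + p - 2 + x"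
    then show ?thesis using sites per_bounds(3)[of j] p2 by simp
  qed
qed

text \<open>Within one route the sites are pairwise distinct: junction sites are at most
  m, interior sites exceed m and are increasing in the phase.\<close>

lemma site_inj:
  assumes j: "j < m" and xy: "x < per j" "y < per j" and eq: "site j x = site j y"
  shows "x = y"
proof (rule ccontr)
  assume ne: "x \<noteq> y"
  have p2: "2 \<le> p" using m2 mp by simp
  have junction: "site j z \<le> m" if "z = 0 \<or> z = per j - 1" for z
    using that j unfolding site_def by auto
  have interior: "m < site j z" if "0 < z" "z < per j - 1" for z
    using that p2 unfolding site_def by auto
  have ends: "site j 0 \<noteq> site j (per j - 1)"
    using per_bounds(1)[of j] j m2 unfolding site_def by auto
  consider "0 < x" "x < per j - 1" "0 < y" "y < per j - 1"
    | "x = 0 \<or> x = per j - 1" "y = 0 \<or> y = per j - 1"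
    | "x = 0 \<or> x = per j - 1" "0 < y" "y < per j - 1"
    | "0 < x" "x < per j - 1" "y = 0 \<or> y = per j - 1"
    using xy by linarith
  then show False
  proof cases
    case 1
    then show ?thesis using eq ne p2 unfolding site_def by (cases "even j") auto
  next
    case 2
    then show ?thesis using ends eq ne by auto
  next
    case 3
    then show ?thesis using junction[of x] interior[of y] eq by simp
  next
    case 4
    then show ?thesis using junction[of y] interior[of x] eq by simp
  qed
qed

lemma site_eq_0: assumes "j < m" "x < per j" "site j x = 0" shows "j = 0"
  using site_cases[OF assms(2)] assms m2 by (auto split: if_splits)

lemma site_eq_1: assumes "j < m" "x < per j" "site j x = 1" shows "j = m - 1"
  using site_cases[OF assms(2)] assms m2 by (auto split: if_splits)

lemma loc_eq_0: "j < m \<Longrightarrow> loc j t = 0 \<Longrightarrow> j = 0"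
  unfolding loc_def using site_eq_0 mod_less_divisor[OF per_bounds(4)] by blast

lemma loc_eq_1: "j < m \<Longrightarrow> loc j t = 1 \<Longrightarrow> j = m - 1"
  unfolding loc_def using site_eq_1 mod_less_divisor[OF per_bounds(4)] by blast

lemma site_surj:
  assumes "s < num_sites"
  shows "\<exists>j<m. \<exists>x<per j. site j x = s"
proof -
  have p2: "2 \<le> p" using m2 mp by simp
  have W: "\<exists>j<m. \<exists>x<per j. site j x = s" if "j < m" "x < per j" "site j x = s" for j x
    using that by blast
  consider "s = 0" | "s = 1" | "2 \<le> s" "s \<le> m" | "m < s" "s \<le> m + p - 2" | "m + p - 2 < s"
    by linarith
  then show ?thesis
  proof cases
    case 1
    have "site 0 0 = 0" unfolding site_def by simp
    then show ?thesis using 1 m2 per_bounds(4)[of 0] by (intro W[of 0 0]) auto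
  next
    case 2
    have pg: "2 \<le> per (m - 1)" by (rule per_bounds)
    have "site (m - 1) (per (m - 1) - 1) = 1" unfolding site_def using pg by simp
    then show ?thesis using 2 m2 pg by (intro W[of "m - 1" "per (m - 1) - 1"]) auto
  next
    case 3
    have pg: "2 \<le> per (s - 2)" by (rule per_bounds)
    have "s - 2 \<noteq> m - 1" using 3 by linarith
    then have "site (s - 2) (per (s - 2) - 1) = s" unfolding site_def using pg 3 by simp
    then show ?thesis using 3 m2 pg by (intro W[of "s - 2" "per (s - 2) - 1"]) auto
  next
    case 4
    have pe: "per 0 = p" by (simp add: per_def)
    have "s - m \<noteq> 0" "s - m \<noteq> p - 1" using 4 p2 by linarith+
    then have "site 0 (s - m) = s" unfolding site_def pe using 4 by simp
    moreover have "s - m < per 0" using 4 pe p2 by linarith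
    ultimately show ?thesis using m2 by (intro W[of 0 "s - m"]) auto
  next
    case 5
    have pe: "per 1 = Suc p" by (simp add: per_def)
    have lt: "s < 2 * p + m - 2" using assms num_sites_def by simp
    have "s + 2 - m - p \<noteq> 0" "s + 2 - m - p \<noteq> p" using 5 lt p2 by linarith+
    then have "site 1 (s + 2 - m - p) = s" unfolding site_def pe using 5 p2 by simp
    moreover have "s + 2 - m - p < per 1" using 5 pe p2 lt by linarith
    ultimately show ?thesis using m2 by (intro W[of 1 "s + 2 - m - p"]) auto
  qed
qed

lemma route_distinct: "j < m \<Longrightarrow> distinct (route j)"
  unfolding route_def
proof (subst distinct_map, intro conjI)
  assume j: "j < m"
  show "distinct [0..<per j]" by simp
  show "inj_on (\<lambda>i. site j ((i + j) mod per j)) (set [0..<per j])"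
  proof (rule inj_onI)
    fix a b assume a: "a \<in> set [0..<per j]" and b: "b \<in> set [0..<per j]"
      and e: "site j ((a + j) mod per j) = site j ((b + j) mod per j)"
    have "(a + j) mod per j = (b + j) mod per j"
      by (rule site_inj[OF j _ _ e]) (use per_bounds(4) in simp)+
    then have "(j + a) mod per j = (j + b) mod per j" by (simp add: add.commute)
    then show "a = b" by (rule mod_cancel_lt) (use a b in auto)
  qed
qed

lemma routes_props: "pv_graph num_sites k routes \<and> irredundant routes \<and> heterogeneous routes"
proof (intro conjI)
  show "pv_graph num_sites k routes" unfolding pv_graph_def
  proof (intro conjI ballI)
    show "length routes = k" by (rule length_routes)
  next
    fix r assume "r \<in> set routes"
    then obtain c where r: "r = route (lvl c)" unfolding routes_def by auto
    show "r \<noteq> []" unfolding r route_def using per_bounds(4) by simp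
    show "set r \<subseteq> {0..<num_sites}"
      unfolding r route_def using site_less[OF lvl_less] per_bounds(4) by auto
  qed
  show "irredundant routes" unfolding irredundant_def
  proof
    fix r assume "r \<in> set routes"
    then obtain c where r: "r = route (lvl c)" unfolding routes_def by auto
    show "irredundant_route r" unfolding r
      by (rule distinct_route_irredundant[OF route_distinct[OF lvl_less]])
        (simp add: route_def per_bounds(1))
  qed
  show "heterogeneous routes" unfolding heterogeneous_def homogeneous_def period_def
  proof
    assume "\<forall>c<length routes. \<forall>d<length routes. length (routes ! c) = length (routes ! d)"
    then have "length (routes ! 0) = length (routes ! 1)" using length_routes m2 mk by simp
    then show False using routes_nth[of 0] routes_nth[of 1] lvl_id[of 0] lvl_id[of 1] m2 mk
      by (simp add: route_def per_def)
  qed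
qed


lemma loc_meet_cases:
  assumes j: "j < m" and j': "j' < m" and eq: "loc j t = loc j' t" and ne: "j \<noteq> j'"
  shows "((t + j) mod per j = per j - 1 \<and> (t + j') mod per j' = 0 \<and> j' = Suc j)
       \<or> ((t + j) mod per j = 0 \<and> (t + j') mod per j' = per j' - 1 \<and> j = Suc j')"
proof -
  define x where "x = (t + j) mod per j"
  define y where "y = (t + j') mod per j'"
  have x: "x < per j" and y: "y < per j'" unfolding x_def y_def using per_bounds(4) by simp_all
  have e: "site j x = site j' y" using eq unfolding loc_def x_def y_def .
  have p2: "2 \<le> p" using m2 mp by simp
  have pe: "per j \<le> Suc p" "per j' \<le> Suc p" "2 \<le> per j" "2 \<le> per j'" by (rule per_bounds)+
  have ppe: "even j \<Longrightarrow> per j = p" "even j' \<Longrightarrow> per j' = p" by (simp_all add: per_even)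
  have ppo: "odd j \<Longrightarrow> per j = Suc p" "odd j' \<Longrightarrow> per j' = Suc p" by (simp_all add: per_odd)
  text \<open>Levels of equal parity run on the same interior sites with distinct phases.\<close>
  have same_even: "j = j'" if "even j" "even j'" "x = y"
  proof -
    have "(t + j) mod p = (t + j') mod p" using that ppe unfolding x_def y_def by simp
    then show ?thesis by (rule mod_cancel_lt) (use j j' mp in linarith)+
  qed
  have same_odd: "j = j'" if "odd j" "odd j'" "x = y"
  proof -
    have "(t + j) mod Suc p = (t + j') mod Suc p" using that ppo unfolding x_def y_def by simp
    then show ?thesis by (rule mod_cancel_lt) (use j j' mp in linarith)+
  qed
  from site_cases[OF x] site_cases[OF y]
  have "(x = per j - 1 \<and> y = 0 \<and> j' = Suc j) \<or> (x = 0 \<and> y = per j' - 1 \<and> j = Suc j')"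
    by (elim disjE conjE)
      (use e ne same_even same_odd j j' p2 pe ppe ppo in \<open>auto split: if_splits\<close>)
  then show ?thesis unfolding x_def y_def .
qed

lemma loc_meet_switch:
  assumes j: "j < m" and j': "j' < m" and eq: "loc j t = loc j' t"
  shows "j' \<le> Suc j \<and> (j' = Suc j \<longrightarrow> sync dvd (t + j'))"
proof (cases "j = j'")
  case False
  from loc_meet_cases[OF j j' eq False] show ?thesis
  proof (elim disjE conjE)
    assume a: "(t + j) mod per j = per j - 1" "(t + j') mod per j' = 0" "j' = Suc j"
    have d1: "per j dvd (t + j')"
      using a(1,3) dvd_Suc_iff_mod_last[OF per_bounds(4)] by simp
    have d2: "per j' dvd (t + j')" using a(2) by (simp add: mod_eq_0_iff_dvd)
    text \<open>The periods of adjacent levels are the coprime numbers p and p+1.\<close>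
    have "(per j = p \<and> per j' = Suc p) \<or> (per j = Suc p \<and> per j' = p)"
      using a(3) by (simp add: per_def)
    then have "p dvd (t + j')" "Suc p dvd (t + j')" using d1 d2 by auto
    then have "sync dvd (t + j')" unfolding sync_def by (intro divides_mult) auto
    then show ?thesis using a by simp
  qed simp
qed simp

lemma loc_meet:
  assumes i: "Suc i < m" and d: "sync dvd (t + Suc i)"
  shows "loc i t = loc (Suc i) t"
proof -
  have d1: "per i dvd Suc (t + i)" using dvd_trans[OF per_dvd_sync d] by simp
  have d2: "per (Suc i) dvd (t + Suc i)" using dvd_trans[OF per_dvd_sync d] .
  have x: "(t + i) mod per i = per i - 1"
    using d1 dvd_Suc_iff_mod_last[OF per_bounds(4)] by blast
  have y: "(t + Suc i) mod per (Suc i) = 0" using d2 by simp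
  have "loc i t = i + 2" unfolding loc_def x site_def using per_bounds(1)[of i] i by auto
  moreover have "loc (Suc i) t = i + 2" unfolding loc_def y site_def by simp
  ultimately show ?thesis by simp
qed

text \<open>The exploring schedule from level j: descend one level at each meeting until
  level 0 is reached at time sync - 1, then climb, spending the window of times
  ((i+1)(sync-1), (i+2)(sync-1)] at level i.  Each window is longer than the period,
  so all sites of route i are seen.\<close>

definition sched :: "nat \<Rightarrow> nat \<Rightarrow> nat" where
  "sched j t = (if t < sync then min j (sync - 1 - t)
                else min (m - 1) ((t - 1) div (sync - 1) - 1))"

lemma sched_less: "j < m \<Longrightarrow> sched j t < m"
  unfolding sched_def using m2 by auto

lemma sched_0: "j < m \<Longrightarrow> sched j 0 = j"
  unfolding sched_def using sync_bounds mp by auto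

lemma sched_window:
  assumes i: "i < m" and t1: "Suc ((i + 1) * (sync - 1)) \<le> t" and t2: "t \<le> (i + 2) * (sync - 1)"
  shows "sched j t = i"
proof -
  define D where "D = sync - 1"
  have D: "sync = Suc D" "D \<ge> 5" unfolding D_def using sync_bounds by auto
  have "D \<le> (i + 1) * D" by simp
  then have nl: "\<not> t < sync" using t1 D unfolding D_def[symmetric] by linarith
  have "(t - 1) div D = i + 1"
    by (rule div_nat_eqI) (use t1 t2 D_def in \<open>auto simp: algebra_simps\<close>)
  then show ?thesis unfolding sched_def D_def[symmetric] using nl i by simp
qed

lemma sched_step_descent:
  assumes j: "j < m" and t: "0 < t" "t < sync"
  shows "loc (sched j t) t = loc (sched j (t - 1)) t"
proof (cases "sync - t \<le> j")
  case True
  define i where "i = sync - 1 - t"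
  have "sched j t = i" "sched j (t - 1) = Suc i"
    using True t unfolding sched_def i_def by auto
  moreover have "loc i t = loc (Suc i) t"
    by (rule loc_meet) (use True j t in \<open>auto simp: i_def\<close>)
  ultimately show ?thesis by simp
next
  case False
  then show ?thesis using t unfolding sched_def by auto
qed

lemma sched_step_climb:
  assumes t: "sync < t"
  shows "loc (sched j t) t = loc (sched j (t - 1)) t"
proof -
  define D where "D = sync - 1"
  have D: "sync = Suc D" "D \<ge> 5" unfolding D_def using sync_bounds by auto
  define a where "a = (t - 1) div D"
  define r where "r = (t - 1) mod D"
  have tr: "t - 1 = a * D + r" unfolding a_def r_def by simp
  have now: "sched j t = min (m - 1) (a - 1)" unfolding sched_def a_def D_def using t by simp
  have "\<not> t - 1 < sync" using t by linarith
  then have before: "sched j (t - 1) = min (m - 1) ((t - 1 - 1) div D - 1)"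
    unfolding sched_def D_def[symmetric] by (simp only: if_False)
  have "0 < D" "0 < t - 1" using D t by auto
  from pred_div[OF this] have pred: "(t - 1 - 1) div D = (if r = 0 then a - 1 else a)"
    unfolding a_def r_def .
  show ?thesis
  proof (cases "r = 0")
    case False
    then show ?thesis using now before pred by simp
  next
    case True
    text \<open>At t = a * (sync - 1) + 1 the schedule moves from level a-2 to a-1.\<close>
    have a2: "a \<ge> 2"
    proof (rule ccontr)
      assume "\<not> a \<ge> 2"
      then have "a * D \<le> D" by simp
      then show False using tr True t D by linarith
    qed
    have before': "sched j (t - 1) = min (m - 1) (a - 2)"
      using before pred True by (simp add: numeral_2_eq_2)
    show ?thesis
    proof (cases "a - 1 \<le> m - 1")
      case True
      define i where "i = a - 2"
      have "sched j t = Suc i" "sched j (t - 1) = i"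
        using now before' True a2 unfolding i_def by auto
      moreover have "loc i t = loc (Suc i) t"
      proof (rule loc_meet)
        show "Suc i < m" using True a2 m2 unfolding i_def by linarith
        have "t + Suc i = a * sync" using tr \<open>r = 0\<close> a2 D t unfolding i_def
          by (cases a) (auto simp: algebra_simps)
        then show "sync dvd t + Suc i" by simp
      qed
      ultimately show ?thesis by simp
    next
      case False
      then show ?thesis using now before' by simp
    qed
  qed
qed

lemma sched_step:
  assumes j: "j < m" and t: "0 < t"
  shows "loc (sched j t) t = loc (sched j (t - 1)) t"
proof -
  consider "t < sync" | "t = sync" | "sync < t" by linarith
  then show ?thesis
  proof cases
    case 2
    then have "sched j t = 0" "sched j (t - 1) = 0" unfolding sched_def using sync_bounds by auto
    then show ?thesis by simp
  qed (use sched_step_descent[OF j t] sched_step_climb in auto)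
qed

definition walk_len :: nat where "walk_len = Suc ((m + 1) * (sync - 1))"

definition walk :: "nat \<Rightarrow> nat list" where "walk j = map (sched j) [0..<walk_len]"

lemma walk_at:
  assumes j: "j < m" and t: "0 < t" "t \<le> walk_len"
  shows "at_site routes x (walk j) t = loc (sched j (t - 1)) t"
proof -
  have "walk j ! (t - 1) = sched j (t - 1)" unfolding walk_def using t by simp
  then show ?thesis unfolding at_site_def using t pos_loc[OF sched_less[OF j]] by simp
qed

lemma walk_realizable:
  assumes j: "j < m"
  shows "realizable routes (loc j 0) (walk j)"
  unfolding realizable_def
proof (intro allI impI conjI)
  fix t assume t: "t < length (walk j)"
  then have tW: "t < walk_len" unfolding walk_def by simp
  have wt: "walk j ! t = sched j t" unfolding walk_def using tW by simp
  show "walk j ! t < length routes"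
    unfolding wt length_routes using sched_less[OF j] mk by (meson order_less_le_trans)
  show "pos routes (walk j ! t) t = at_site routes (loc j 0) (walk j) t"
  proof (cases "t = 0")
    case True
    then show ?thesis unfolding wt at_site_def using pos_loc[OF j] sched_0[OF j] by simp
  next
    case False
    then have "at_site routes (loc j 0) (walk j) t = loc (sched j (t - 1)) t"
      using walk_at[OF j] tW by simp
    also have "\<dots> = loc (sched j t) t" using sched_step[OF j] False by simp
    finally show ?thesis unfolding wt using pos_loc[OF sched_less[OF j]] by simp
  qed
qed

lemma walk_visits_all:
  assumes j: "j < m"
  shows "visits_all num_sites routes (loc j 0) (walk j)"
  unfolding visits_all_def
proof
  fix s assume "s \<in> {0..<num_sites}"
  then obtain i y where i: "i < m" and y: "y < per i" and s: "site i y = s"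
    using site_surj[of s] by auto
  text \<open>Pick a time in the window of level i at which route i is at phase y.\<close>
  define a where "a = Suc ((i + 1) * (sync - 1))"
  from mod_hit[OF per_bounds(4) y, of "Suc (a + i)"] obtain d where
    d: "d < per i" "(Suc (a + i) + d) mod per i = y" by blast
  define t where "t = a + d"
  have "per i \<le> sync - 1" using per_bounds(3)[of i] sync_bounds(2) by linarith
  moreover have "(i + 2) * (sync - 1) = (i + 1) * (sync - 1) + (sync - 1)"
    using add_mult_distrib[of "i + 1" 1 "sync - 1"] by simp
  ultimately have t1: "Suc ((i + 1) * (sync - 1)) \<le> t" and t2: "t \<le> (i + 2) * (sync - 1)"
    unfolding t_def a_def using d(1) by linarith+
  have "(i + 2) * (sync - 1) \<le> (m + 1) * (sync - 1)" using i by (intro mult_right_mono) simp_all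
  then have tW: "Suc t \<le> walk_len" unfolding walk_len_def using t2 by simp
  have "at_site routes (loc j 0) (walk j) (Suc t) = loc (sched j t) (Suc t)"
    using walk_at[OF j _ tW] by simp
  also have "\<dots> = loc i (Suc t)" using sched_window[OF i t1 t2] by simp
  also have "\<dots> = site i ((Suc (a + i) + d) mod per i)"
    unfolding loc_def using add.commute add.left_commute t_def by (metis add_Suc)
  finally have "at_site routes (loc j 0) (walk j) (Suc t) = s" using d(2) s by simp
  moreover have "Suc t \<le> length (walk j)" unfolding walk_def using tW by simp
  ultimately show "s \<in> {at_site routes (loc j 0) (walk j) i |i. i \<le> length (walk j)}" by blast
qed

lemma routes_feasible: "feasible num_sites routes"
  unfolding feasible_def
proof
  fix x assume "x \<in> start_sites routes"
  then obtain c where c: "c < k" and x: "x = pos routes c 0"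
    unfolding start_sites_def length_routes by auto
  have "x = loc (lvl c) 0" using x pos_routes[OF c] by simp
  then show "\<exists>cs. realizable routes x cs \<and> visits_all num_sites routes x cs"
    using walk_realizable[OF lvl_less] walk_visits_all[OF lvl_less] by blast
qed

lemma reach_site_1:
  assumes real: "realizable routes 0 cs" and t: "t \<le> length cs" "at_site routes 0 cs t = 1"
  shows "(m - 1) * (sync - 1) + 1 \<le> t"
proof -
  have t0: "t \<noteq> 0"
  proof
    assume "t = 0"
    then show False using t(2) by (simp add: at_site_def)
  qed
  then have tl: "t - 1 < length cs" using t(1) by simp
  have carrier: "cs ! i < k" if "i < length cs" for i
    using real that length_routes unfolding realizable_def by auto
  have "lvl (cs ! (t - 1)) * (sync - 1) \<le> t - 1"
  proof (rule level_invariant[OF real _ _ _ tl])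
    fix c d t assume "c < length routes" "d < length routes" "pos routes c t = pos routes d t"
    then have "loc (lvl c) t = loc (lvl d) t" using pos_routes length_routes by simp
    then show "lvl d \<le> Suc (lvl c) \<and> (lvl d = Suc (lvl c) \<longrightarrow> sync dvd (t + lvl d))"
      by (rule loc_meet_switch[OF lvl_less lvl_less])
  next
    show "1 \<le> sync" using sync_bounds by simp
  next
    assume "cs \<noteq> []"
    then have "pos routes (cs ! 0) 0 = 0"
      using real unfolding realizable_def at_site_def by auto
    then show "lvl (cs ! 0) = 0"
      using loc_eq_0[OF lvl_less] pos_routes carrier \<open>cs \<noteq> []\<close> by simp
  qed
  moreover have "pos routes (cs ! (t - 1)) t = 1" using t t0 unfolding at_site_def by simp
  then have "lvl (cs ! (t - 1)) = m - 1"
    using loc_eq_1[OF lvl_less] pos_routes carrier[OF tl] by simp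
  ultimately show ?thesis using t0 by simp
qed

lemma routes_min_moves: "(m - 1) * (sync - 1) + 1 \<le> min_moves num_sites routes"
proof (rule min_moves_lower_bound[OF routes_feasible])
  fix \<sigma> assume sol: "solves num_sites routes \<sigma>"
  have "loc 0 0 = 0" unfolding loc_def site_def by simp
  then have start: "0 \<in> start_sites routes"
    unfolding start_sites_def length_routes using pos_loc[of 0 0] m2 mk by force
  then have real: "realizable routes 0 (\<sigma> 0)" and vis: "visits_all num_sites routes 0 (\<sigma> 0)"
    using sol unfolding solves_def by blast+
  have "1 < num_sites" unfolding num_sites_def using m2 mp by simp
  then obtain t where "t \<le> length (\<sigma> 0)" "at_site routes 0 (\<sigma> 0) t = 1"
    using vis unfolding visits_all_def by force
  then have "(m - 1) * (sync - 1) + 1 \<le> length (\<sigma> 0)"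
    using reach_site_1[OF real] by fastforce
  then show "\<exists>x\<in>start_sites routes. (m - 1) * (sync - 1) + 1 \<le> length (\<sigma> x)"
    using start by blast
qed

end

lemma chain_instance:
  assumes "2 \<le> m" "m \<le> p" "m \<le> k"
  shows "\<exists>R. pv_graph (2 * p + m - 2) k R \<and> feasible (2 * p + m - 2) R \<and> irredundant R
    \<and> heterogeneous R \<and> (m - 1) * (p * Suc p - 1) + 1 \<le> min_moves (2 * p + m - 2) R"
proof -
  interpret chain p m k using assms by unfold_locales
  show ?thesis using routes_props routes_feasible routes_min_moves
    unfolding num_sites_def sync_def by blast
qed


lemma amgm3:
  fixes a c :: real
  assumes "0 \<le> a" "0 \<le> c"
  shows "27 * (a^2 * c) \<le> (2 * a + c)^3"
proof -
  have "(2 * a + c)^3 - 27 * (a^2 * c) = (a - c)^2 * (8 * a + c)"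
    by (simp add: power2_eq_square power3_eq_cube algebra_simps)
  moreover have "0 \<le> (a - c)^2 * (8 * a + c)" using assms by simp
  ultimately show ?thesis by linarith
qed

lemma target_le_cube:
  fixes n k :: real
  assumes "2 \<le> k" "k \<le> n"
  shows "(n - k)^2 * (k - 2) / 4 \<le> (n - 2)^3 / 27"
proof -
  have amgm: "27 * (((n - k) / 2)^2 * (k - 2)) \<le> (2 * ((n - k) / 2) + (k - 2))^3"
    by (rule amgm3) (use assms in auto)
  have sum: "2 * ((n - k) / 2) + (k - 2) = n - 2" by (simp add: field_simps)
  have sq: "((n - k) / 2)^2 = (n - k)^2 / 4" by (simp add: power_divide)
  have "27 * ((n - k)^2 / 4 * (k - 2)) \<le> (n - 2)^3" using amgm unfolding sum sq .
  then show ?thesis by (simp add: field_simps)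
qed

text \<open>For n <= 7 the target is below n-1, the cost of the trivial instance.\<close>

lemma cube_small:
  fixes n :: real
  assumes "3 \<le> n" "n \<le> 7"
  shows "(n - 2)^3 / 27 < n - 1"
proof -
  define u where "u = n - 2"
  have u: "1 \<le> u" "u \<le> 5" using assms unfolding u_def by auto
  have "u^2 \<le> 5^2" using u by (intro power_mono) auto
  then have "u * u^2 \<le> u * 25" using u by (intro mult_left_mono) auto
  then have "u^3 \<le> 25 * u" by (simp add: power3_eq_cube power2_eq_square algebra_simps)
  then have "u^3 < 27 * u + 27" using u by linarith
  then show ?thesis unfolding u_def by simp
qed

text \<open>Chain cost (m-1)(p(p+1)-1)+1 versus the target, first when all k carriers
  are used as levels (K = k-2, A = n-k) ...\<close>

lemma cost_bound_few_carriers: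
  fixes A K M P :: real
  assumes "1 \<le> K" "K \<le> M" "0 \<le> A" "A + 2 \<le> 2 * P"
  shows "K * A^2 / 4 < M * (P * (P + 1) - 1) + 1"
proof -
  define X where "X = P * (P + 1)"
  have "(A + 2) * (A + 4) \<le> (2 * P) * (2 * P + 2)"
    using assms by (intro mult_mono) auto
  moreover have "(2 * P) * (2 * P + 2) = 4 * X" unfolding X_def by (simp add: algebra_simps)
  moreover have "(A + 2) * (A + 4) = A^2 + 6 * A + 8" by (simp add: power2_eq_square algebra_simps)
  ultimately have "A^2 \<le> 4 * X - 4" using assms(3) by linarith
  then have h: "A^2 \<le> 4 * (X - 1)" by (simp add: algebra_simps)
  then have "K * A^2 \<le> K * (4 * (X - 1))" using assms by (intro mult_left_mono) auto
  also have "\<dots> \<le> M * (4 * (X - 1))"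
    using assms(2) h zero_le_power2[of A] by (intro mult_right_mono) linarith+
  finally have "K * A^2 / 4 \<le> M * (X - 1)" by (simp add: algebra_simps)
  then show ?thesis unfolding X_def by linarith
qed

text \<open>... and then when only about n/3 levels are used, so that p is about n/3.\<close>

lemma cost_bound_many_carriers:
  fixes n M P :: real
  assumes "8 \<le> n" "n / 3 - 2 \<le> M" "(n + 2) / 3 \<le> P"
  shows "(n - 2)^3 / 27 < M * (P * (P + 1) - 1) + 1"
proof -
  define Q where "Q = (n + 2) / 3"
  have Q1: "1 \<le> Q" unfolding Q_def using assms(1) by simp
  have "1 * 1 \<le> Q * (Q + 1)" using Q1 by (intro mult_mono) auto
  then have Q0: "0 \<le> Q * (Q + 1) - 1" by simp
  have "Q * (Q + 1) \<le> P * (P + 1)" using assms(3) Q1 unfolding Q_def by (intro mult_mono) auto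
  then have "(n / 3 - 2) * (Q * (Q + 1) - 1) \<le> M * (P * (P + 1) - 1)"
    using assms Q0 by (intro mult_mono) auto
  moreover have "27 * ((n / 3 - 2) * (Q * (Q + 1) - 1)) = (n - 6) * (n^2 + 7 * n + 1)"
    unfolding Q_def by (simp add: power2_eq_square algebra_simps divide_simps)
  moreover have "(n - 6) * (n^2 + 7 * n + 1) - (n - 2)^3 = 7 * n^2 - 53 * n + 2"
    by (simp add: power2_eq_square power3_eq_cube algebra_simps)
  moreover have "7 * n^2 - 53 * n + 2 > 0"
  proof -
    have "n * 8 \<le> n * n" using assms(1) by (intro mult_left_mono) auto
    then have "0 < 7 * (n * n) - 53 * n + 2" using assms(1) by linarith
    then show ?thesis by (simp add: power2_eq_square)
  qed
  ultimately show ?thesis by linarith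
qed

text \<open>Choice of chain parameters for n sites: m = min(k, (n+2) div 3), lowered by
  one if needed so that n - m is even, and p = (n-m+2)/2.\<close>

lemma chain_parameters:
  fixes n k :: nat
  assumes "8 \<le> n" "3 \<le> k"
  obtains m p where "2 \<le> m" "m \<le> p" "m \<le> k" "2 * p + m - 2 = n"
    "min k ((n + 2) div 3) \<le> m + 1" "3 * m \<le> n + 2"
proof -
  define m0 where "m0 = min k ((n + 2) div 3)"
  define m where "m = (if even (n - m0) then m0 else m0 - 1)"
  define p where "p = (n - m + 2) div 2"
  have m0: "3 \<le> m0" "m0 \<le> k" "3 * m0 \<le> n + 2" unfolding m0_def using assms by auto
  have m: "m \<le> m0" "m0 \<le> m + 1" "even (n - m)" "2 \<le> m"
    unfolding m_def using m0 by (auto simp: even_diff_nat)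
  have "2 * p = n - m + 2" unfolding p_def using m m0 by (auto elim!: evenE)
  then show ?thesis using that[of m p] m m0 unfolding m0_def by linarith
qed

lemma chain_cost_exceeds_target:
  fixes n k m p :: nat
  assumes n: "8 \<le> n" and k: "3 \<le> k" "k < n" and m: "m \<le> k" "3 * m \<le> n + 2"
    and np: "2 * p + m - 2 = n" and mk: "min k ((n + 2) div 3) \<le> m + 1"
  shows "(real n - real k)^2 * (real k - 2) / 4 < (real m - 1) * (real p * (real p + 1) - 1) + 1"
proof -
  have p2: "2 * real p = real n - real m + 2" using np m n by linarith
  show ?thesis
  proof (cases "k \<le> (n + 2) div 3")
    case True
    then have "(real k - 2) * (real n - real k)^2 / 4 < (real m - 1) * (real p * (real p + 1) - 1) + 1"
      using mk k m p2 by (intro cost_bound_few_carriers) auto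
    then show ?thesis by (simp add: algebra_simps)
  next
    case False
    then have "(n + 2) div 3 \<le> m + 1" using mk by simp
    moreover have "n \<le> 3 * ((n + 2) div 3)" by linarith
    ultimately have "n \<le> 3 * (m + 1)" by (meson le_trans mult_le_mono2)
    then have "(real n - 2)^3 / 27 < (real m - 1) * (real p * (real p + 1) - 1) + 1"
      using n m p2 by (intro cost_bound_many_carriers) auto
    moreover have "(real n - real k)^2 * (real k - 2) / 4 \<le> (real n - 2)^3 / 27"
      using k by (intro target_le_cube) auto
    ultimately show ?thesis by linarith
  qed
qed

lemma hard_graph_exists:
  fixes n k :: nat
  assumes n: "3 \<le> n" and k: "2 \<le> k" "k < n"
  shows "\<exists>R. pv_graph n k R \<and> feasible n R \<and> irredundant R \<and> heterogeneous R \<and>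
           (real n - real k)^2 * (real k - 2) / 4 < real (min_moves n R)"
proof -
  define T where "T = (real n - real k)^2 * (real k - 2) / 4"
  have T_cube: "T \<le> (real n - 2)^3 / 27" unfolding T_def using k by (intro target_le_cube) auto
  show ?thesis
  proof (cases "n \<le> 7 \<or> T < real n - 1")
    case True
    then have "T < real n - 1" using T_cube cube_small[of n] n by force
    moreover obtain R where "pv_graph n k R \<and> feasible n R \<and> irredundant R \<and> heterogeneous R
      \<and> n - 1 \<le> min_moves n R" using line_graph_instance n k by blast
    ultimately show ?thesis unfolding T_def using n by force
  next
    case False
    then have n8: "8 \<le> n" and "real n - 1 \<le> T" by auto
    then have k3: "3 \<le> k" using k unfolding T_def by (cases "k = 2") auto
    obtain m p where mp: "2 \<le> m" "m \<le> p" "m \<le> k" "2 * p + m - 2 = n"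
      "min k ((n + 2) div 3) \<le> m + 1" "3 * m \<le> n + 2"
      using chain_parameters[OF n8 k3] by blast
    obtain R where R: "pv_graph n k R \<and> feasible n R \<and> irredundant R \<and> heterogeneous R"
      and low: "(m - 1) * (p * Suc p - 1) + 1 \<le> min_moves n R"
      using chain_instance[OF mp(1-3)] mp(4) by blast
    have "1 \<le> p * Suc p" using mp(1,2) by simp
    then have "real (p * Suc p - 1) = real p * (real p + 1) - 1" by (simp add: of_nat_diff algebra_simps)
    moreover have "real (m - 1) = real m - 1" using mp(1) by simp
    ultimately have "real ((m - 1) * (p * Suc p - 1) + 1)
        = (real m - 1) * (real p * (real p + 1) - 1) + 1" by simp
    then have "T < real ((m - 1) * (p * Suc p - 1) + 1)"
      using chain_cost_exceeds_target[OF n8 k3 k(2) mp(3,6,4,5)] unfolding T_def by simp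
    then show ?thesis using R low unfolding T_def by (meson of_nat_le_iff order_less_le_trans)
  qed
qed

text \<open>Main theorem: with k <= eps n we have (n-k)^2 >= (1-eps)^2 n^2, and
  n >= 2/eps > 2 gives n >= 3 and k < n.\<close>

theorem mainTheorem8:
  fixes \<epsilon> :: real and n k :: nat
  assumes "0 < \<epsilon>" and "\<epsilon> < 1"
    and "real n \<ge> 2 / \<epsilon>"
    and "2 \<le> k" and "real k \<le> \<epsilon> * real n"
  shows "\<exists>R. pv_graph n k R \<and> feasible n R \<and> irredundant R \<and> heterogeneous R \<and>
           real (min_moves n R) > 1/4 * (1 - \<epsilon>)^2 * (real n)^2 * (real k - 2)"
proof -
  have "2 < 2 / \<epsilon>" using assms(1,2) by (simp add: field_simps)
  then have n3: "3 \<le> n" using assms(3) by linarith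
  have "\<epsilon> * real n < real n" using assms(2) n3 by simp
  then have kn: "k < n" using assms(5) by linarith
  have "(1 - \<epsilon>) * real n \<le> real n - real k" using assms(5) by (simp add: algebra_simps)
  then have "((1 - \<epsilon>) * real n)^2 \<le> (real n - real k)^2"
    using assms(2) by (intro power_mono) simp_all
  then have "1/4 * (1 - \<epsilon>)^2 * (real n)^2 * (real k - 2) \<le> (real n - real k)^2 * (real k - 2) / 4"
    using assms(4) by (simp add: power_mult_distrib mult_right_mono)
  then show ?thesis using hard_graph_exists[OF n3 assms(4) kn] by (meson order_le_less_trans)
qed

end
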